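(* For every set of formulas $\Gamma$ and formula $\alpha$: $\circ^{\#}(Var(\Gamma\cup\{\alpha\})),\Gamma\vdash_{LFI3}\alpha$ if and only if $\Gamma\vdash_{LFI1}\alpha$, where $\circ^{\#}(X)=\{\circ^{\#}p: p\in X\}$.
   Context: Formulas are built from a countable set of propositional variables using unary $\neg,\circ$ and binary $\land,\lor,\to$. Define $\bullet\alpha:=\neg\circ\alpha$, $\circ^*\alpha:=(\alpha\land\circ\alpha\land\circ\circ\alpha)\lor(\neg\alpha\land\circ\alpha\land\circ\circ\alpha)$ and $\circ^{\#}\alpha:=\circ^*\alpha\lor(\bullet\alpha\land\circ\circ\alpha)$. $Var(\Delta)$ is the set of propositional variables occurring in $\Delta$. On $\{0,1\}$ use Boolean $\land,\lor,\to,\sim$. Let $\mathbb{B}=\{x\in\{0,1\}^3: x_1\lor x_2=1,\ x_3\lor\sim(x_1\land x_2)=1\}$. The LFI3 algebra on $\mathbb{B}$: $a\dot\land b=(a_1\land b_1,\ a_2\lor b_2,\ (\sim a_2\land b_3)\lor(a_3\land\sim b_2)\lor(a_3\land b_3))$; $a\dot\lor b=(a_1\lor b_1,\ a_2\land b_2,\ (\sim a_1\land b_3)\lor(a_3\land\sim b_1)\lor(a_3\land b_3))$; $a\dot\to b=(a_1\to b_1,\ b_2\land(\sim a_2\lor a_3),\ (\sim a_2\land b_3)\lor(\sim a_2\land a_3\land\sim b_1)\lor(a_3\land b_3)\lor(\sim a_1\land a_3\land\sim b_1))$; $\dot\neg a=(a_2,a_1,a_3)$; $\dot\circ a=(\sim(a_1\land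 a_2),a_3,a_3\land\sim(a_1\land a_2))$; designated set $\{x:x_1=1\}$. LFI1 is the three-valued matrix logic on $\{1,\frac12,0\}$ with designated set $\{1,\frac12\}$, $\land=\min$, $\lor=\max$ (order $0<\frac12<1$), $a\to c=1$ if $a=0$ and $a\to c=c$ otherwise, $\neg1=0$, $\neg\frac12=\frac12$, $\neg0=1$, $\circ1=\circ0=1$, $\circ\frac12=0$. For both matrix logics, $\Gamma\vdash\alpha$ iff every homomorphic valuation designating all of $\Gamma$ designates $\alpha$. *)

theory Defs
  imports Main
begin

datatype fm = Atom nat | Neg fm | Circ fm | Conj fm fm | Disj fm fm | Imp fm fm

definition Bul :: "fm \<Rightarrow> fm" where "Bul a = Neg (Circ a)"

definition CircStar :: "fm \<Rightarrow> fm" where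
  "CircStar a = Disj (Conj (Conj a (Circ a)) (Circ (Circ a)))
                     (Conj (Conj (Neg a) (Circ a)) (Circ (Circ a)))"

definition CircSharp :: "fm \<Rightarrow> fm" where
  "CircSharp a = Disj (CircStar a) (Conj (Bul a) (Circ (Circ a)))"

fun vars :: "fm \<Rightarrow> nat set" where
  "vars (Atom p) = {p}"
| "vars (Neg a) = vars a"
| "vars (Circ a) = vars a"
| "vars (Conj a b) = vars a \<union> vars b"
| "vars (Disj a b) = vars a \<union> vars b"
| "vars (Imp a b) = vars a \<union> vars b"

definition Var :: "fm set \<Rightarrow> nat set" where "Var \<Delta> = (\<Union>a\<in>\<Delta>. vars a)"

type_synonym tri = "bool \<times> bool \<times> bool"

definition BB :: "tri set" where
  "BB = {(x1,x2,x3). (x1 \<or> x2) \<and> (x3 \<or> \<not>(x1 \<and> x2))}"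

fun and3 :: "tri \<Rightarrow> tri \<Rightarrow> tri" where
  "and3 (a1,a2,a3) (b1,b2,b3) = (a1 \<and> b1, a2 \<or> b2,
      (\<not>a2 \<and> b3) \<or> (a3 \<and> \<not>b2) \<or> (a3 \<and> b3))"

fun or3 :: "tri \<Rightarrow> tri \<Rightarrow> tri" where
  "or3 (a1,a2,a3) (b1,b2,b3) = (a1 \<or> b1, a2 \<and> b2,
      (\<not>a1 \<and> b3) \<or> (a3 \<and> \<not>b1) \<or> (a3 \<and> b3))"

fun imp3 :: "tri \<Rightarrow> tri \<Rightarrow> tri" where
  "imp3 (a1,a2,a3) (b1,b2,b3) = (a1 \<longrightarrow> b1, b2 \<and> (\<not>a2 \<or> a3),
      (\<not>a2 \<and> b3) \<or> (\<not>a2 \<and> a3 \<and> \<not>b1) \<or> (a3 \<and> b3) \<or> (\<not>a1 \<and> a3 \<and> \<not>b1))"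

fun neg3 :: "tri \<Rightarrow> tri" where
  "neg3 (a1,a2,a3) = (a2,a1,a3)"

fun circ3 :: "tri \<Rightarrow> tri" where
  "circ3 (a1,a2,a3) = (\<not>(a1 \<and> a2), a3, a3 \<and> \<not>(a1 \<and> a2))"

fun eval3 :: "(nat \<Rightarrow> tri) \<Rightarrow> fm \<Rightarrow> tri" where
  "eval3 v (Atom p) = v p"
| "eval3 v (Neg a) = neg3 (eval3 v a)"
| "eval3 v (Circ a) = circ3 (eval3 v a)"
| "eval3 v (Conj a b) = and3 (eval3 v a) (eval3 v b)"
| "eval3 v (Disj a b) = or3 (eval3 v a) (eval3 v b)"
| "eval3 v (Imp a b) = imp3 (eval3 v a) (eval3 v b)"

definition des3 :: "tri \<Rightarrow> bool" where "des3 x = fst x"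

definition cons_LFI3 :: "fm set \<Rightarrow> fm \<Rightarrow> bool" where
  "cons_LFI3 \<Gamma> a = (\<forall>v. (\<forall>p. v p \<in> BB) \<longrightarrow>
      (\<forall>g\<in>\<Gamma>. des3 (eval3 v g)) \<longrightarrow> des3 (eval3 v a))"

(* LFI1: three-valued matrix; One = 1, Half = 1/2, Zero = 0 *)
datatype tv = Zero | Half | One

fun rank :: "tv \<Rightarrow> nat" where
  "rank Zero = 0" | "rank Half = 1" | "rank One = 2"

definition min1 :: "tv \<Rightarrow> tv \<Rightarrow> tv" where
  "min1 a b = (if rank a \<le> rank b then a else b)"
definition max1 :: "tv \<Rightarrow> tv \<Rightarrow> tv" where
  "max1 a b = (if rank a \<le> rank b then b else a)"

fun imp1 :: "tv \<Rightarrow> tv \<Rightarrow> tv" where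
  "imp1 Zero c = One" | "imp1 Half c = c" | "imp1 One c = c"

fun neg1 :: "tv \<Rightarrow> tv" where
  "neg1 One = Zero" | "neg1 Half = Half" | "neg1 Zero = One"

fun circ1 :: "tv \<Rightarrow> tv" where
  "circ1 One = One" | "circ1 Zero = One" | "circ1 Half = Zero"

fun eval1 :: "(nat \<Rightarrow> tv) \<Rightarrow> fm \<Rightarrow> tv" where
  "eval1 v (Atom p) = v p"
| "eval1 v (Neg a) = neg1 (eval1 v a)"
| "eval1 v (Circ a) = circ1 (eval1 v a)"
| "eval1 v (Conj a b) = min1 (eval1 v a) (eval1 v b)"
| "eval1 v (Disj a b) = max1 (eval1 v a) (eval1 v b)"
| "eval1 v (Imp a b) = imp1 (eval1 v a) (eval1 v b)"

definition des1 :: "tv \<Rightarrow> bool" where "des1 x = (x = One \<or> x = Half)"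

definition cons_LFI1 :: "fm set \<Rightarrow> fm \<Rightarrow> bool" where
  "cons_LFI1 \<Gamma> a = (\<forall>v. (\<forall>g\<in>\<Gamma>. des1 (eval1 v g)) \<longrightarrow> des1 (eval1 v a))"

end

theory Submission
  imports Defs
begin

text \<open>The map \<open>tri_of_tv\<close> (\<open>1 \<mapsto> (1,0,0)\<close>, \<open>0 \<mapsto> (0,1,0)\<close>, \<open>1/2 \<mapsto> (1,1,1)\<close>) embeds
  the LFI1 matrix into the LFI3 algebra as a subalgebra, preserving and reflecting designation.
  Moreover \<open>\<circ>\<^sup>#p\<close> is designated under an LFI3 valuation exactly when the value of \<open>p\<close>
  lies in this subalgebra. Hence LFI3 valuations designating all \<open>\<circ>\<^sup>#p\<close> for the relevant
  variables are, on the formulas at hand, just LFI1 valuations transported along the embedding.\<close>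

fun tri_of_tv :: "tv \<Rightarrow> tri" where
  "tri_of_tv One = (True, False, False)"
| "tri_of_tv Zero = (False, True, False)"
| "tri_of_tv Half = (True, True, True)"

lemma range_tri_of_tv:
  "range tri_of_tv = {(True, False, False), (False, True, False), (True, True, True)}"
proof -
  have UNIV_tv: "(UNIV :: tv set) = {One, Zero, Half}"
    using tv.exhaust by auto
  show ?thesis
    unfolding UNIV_tv by simp
qed

lemma tri_of_tv_in_BB: "tri_of_tv x \<in> BB"
  by (cases x) (auto simp: BB_def)

lemma des3_tri_of_tv: "des3 (tri_of_tv x) = des1 x"
  by (cases x) (auto simp: des3_def des1_def)

lemma eval3_tri_of_tv: "eval3 (tri_of_tv \<circ> v) a = tri_of_tv (eval1 v a)"
proof (induction a)
  case (Neg a) then show ?case by (cases "eval1 v a") auto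
next
  case (Circ a) then show ?case by (cases "eval1 v a") auto
next
  case (Conj a b) then show ?case
    by (cases "eval1 v a"; cases "eval1 v b") (auto simp: min1_def)
next
  case (Disj a b) then show ?case
    by (cases "eval1 v a"; cases "eval1 v b") (auto simp: max1_def)
next
  case (Imp a b) then show ?case
    by (cases "eval1 v a"; cases "eval1 v b") auto
qed simp

lemma eval3_cong: "(\<And>p. p \<in> vars a \<Longrightarrow> v p = w p) \<Longrightarrow> eval3 v a = eval3 w a"
  by (induction a) auto

lemma eval3_eq_tri_of_tv_eval1:
  assumes "\<And>p. p \<in> vars a \<Longrightarrow> w p \<in> range tri_of_tv"
  shows "eval3 w a = tri_of_tv (eval1 (inv tri_of_tv \<circ> w) a)"
proof -
  have "eval3 w a = eval3 (tri_of_tv \<circ> (inv tri_of_tv \<circ> w)) a"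
    by (rule eval3_cong) (simp add: assms f_inv_into_f)
  then show ?thesis
    by (simp only: eval3_tri_of_tv)
qed

lemma des3_CircSharp_Atom_iff:
  assumes "v p \<in> BB"
  shows "des3 (eval3 v (CircSharp (Atom p))) \<longleftrightarrow> v p \<in> range tri_of_tv"
proof -
  obtain x1 x2 x3 where "v p = (x1, x2, x3)"
    by (cases "v p")
  with assms show ?thesis
    by (cases x1; cases x2; cases x3)
      (auto simp: range_tri_of_tv CircSharp_def CircStar_def Bul_def des3_def BB_def)
qed

lemma cons_LFI3_CircSharp_imp_cons_LFI1:
  assumes "cons_LFI3 ((\<lambda>p. CircSharp (Atom p)) ` X \<union> \<Gamma>) \<alpha>"
  shows "cons_LFI1 \<Gamma> \<alpha>"
  unfolding cons_LFI1_def
proof (intro allI impI)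
  fix v
  assume "\<forall>g\<in>\<Gamma>. des1 (eval1 v g)"
  then have "\<forall>g\<in>(\<lambda>p. CircSharp (Atom p)) ` X \<union> \<Gamma>. des3 (eval3 (tri_of_tv \<circ> v) g)"
    using des3_CircSharp_Atom_iff[of "tri_of_tv \<circ> v"]
    by (auto simp: tri_of_tv_in_BB eval3_tri_of_tv des3_tri_of_tv)
  with assms have "des3 (eval3 (tri_of_tv \<circ> v) \<alpha>)"
    by (simp add: cons_LFI3_def tri_of_tv_in_BB)
  then show "des1 (eval1 v \<alpha>)"
    by (simp add: eval3_tri_of_tv des3_tri_of_tv)
qed

lemma cons_LFI1_imp_cons_LFI3_CircSharp:
  assumes "cons_LFI1 \<Gamma> \<alpha>" and "Var (\<Gamma> \<union> {\<alpha>}) \<subseteq> X"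
  shows "cons_LFI3 ((\<lambda>p. CircSharp (Atom p)) ` X \<union> \<Gamma>) \<alpha>"
  unfolding cons_LFI3_def
proof (intro allI impI)
  fix w
  assume BB: "\<forall>p. w p \<in> BB"
    and designated: "\<forall>g\<in>(\<lambda>p. CircSharp (Atom p)) ` X \<union> \<Gamma>. des3 (eval3 w g)"
  have "w p \<in> range tri_of_tv" if "p \<in> X" for p
    using designated that BB des3_CircSharp_Atom_iff by blast
  then have eval3_w: "eval3 w a = tri_of_tv (eval1 (inv tri_of_tv \<circ> w) a)"
    if "a \<in> \<Gamma> \<union> {\<alpha>}" for a
    using that assms(2) by (intro eval3_eq_tri_of_tv_eval1) (auto simp: Var_def)
  have "\<forall>g\<in>\<Gamma>. des1 (eval1 (inv tri_of_tv \<circ> w) g)"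
  proof
    fix g
    assume "g \<in> \<Gamma>"
    with designated have "des3 (eval3 w g)"
      by blast
    with \<open>g \<in> \<Gamma>\<close> show "des1 (eval1 (inv tri_of_tv \<circ> w) g)"
      by (simp add: eval3_w des3_tri_of_tv)
  qed
  with assms(1) have "des1 (eval1 (inv tri_of_tv \<circ> w) \<alpha>)"
    by (simp add: cons_LFI1_def)
  then show "des3 (eval3 w \<alpha>)"
    by (simp add: eval3_w des3_tri_of_tv)
qed

theorem theorem20:
  fixes \<Gamma> :: "fm set" and \<alpha> :: fm
  shows "cons_LFI3 ((\<lambda>p. CircSharp (Atom p)) ` Var (\<Gamma> \<union> {\<alpha>}) \<union> \<Gamma>) \<alpha>
           \<longleftrightarrow> cons_LFI1 \<Gamma> \<alpha>"
  using cons_LFI3_CircSharp_imp_cons_LFI1 cons_LFI1_imp_cons_LFI3_CircSharp by blast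

end
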